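(* Let $q>1$, $0\le M_0<M$, let $u$ be a sufficiently smooth $L$-periodic solution of $u_t=-\alpha uu_x+\beta u_{xxx}$ on $[0,T]\times\mathbb{R}$, $r>\sup_{t,x}|u(t,x)|$. Assume $u^{(0)}_k=u(0,k\Delta x)$, that $u^{(0)},\dots,u^{(M_0+1)}$ are obtained successively as solutions of the scheme, that $\|u^{(m)}\|_\infty\le r$ for $m\le M_0$, that $\Delta t<\min\{\varepsilon_1(q,r,\Delta x),\varepsilon_2(q,r,\Delta x)\}$, and that $\|u^{(M_0+1)}\|_\infty\le qr$. Let $c_0>0$ be a constant independent of $\Delta t,\Delta x$ with $\|\tau^{(m)}\|,\|\delta^+_x\tau^{(m)}\|\le c_0((\Delta t)^2+(\Delta x)^2)$ for $m=0,\dots,M_0$. Then for $m=0,\dots,M_0$, $$\delta^+_t\|e^{(m)}\|^2\le C_1\,\mu^+_t\|e^{(m)}\|_{H^1}^2 + c_0^2\big((\Delta t)^2+(\Delta x)^2\big)^2,$$ where $C_1=C_1(q,r)=\max\{3|\alpha|(2q^2+1)r^2+1,\ |\alpha|/2\}$.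
   Context: $L>0$, $K\in\mathbb{N}$, $\Delta x=L/K$; $T>0$, $M\in\mathbb{N}$, $\Delta t=T/M$; $\alpha\in\mathbb{R}$, $\beta\ne0$. Grid functions are $K$-periodic real sequences. $\delta^+_x v_k=(v_{k+1}-v_k)/\Delta x$, $\delta^{\langle 1\rangle}_x v_k = (v_{k+1}-v_{k-1})/(2\Delta x)$, $\delta^{\langle 2\rangle}_x v_k = (v_{k+1}-2v_k+v_{k-1})/(\Delta x)^2$, $\|v\|=(\sum_{k=1}^K v_k^2\Delta x)^{1/2}$, $\|v\|_\infty=\max_k|v_k|$, $\|v\|_{H^1}=(\|v\|^2+\|\delta^+_xv\|^2)^{1/2}$; $\delta^+_t v^{(n)}=(v^{(n+1)}-v^{(n)})/\Delta t$, $\mu^+_t v^{(n)}=(v^{(n+1)}+v^{(n)})/2$ (so e.g. $\mu^+_t\|e^{(m)}\|^2=(\|e^{(m+1)}\|^2+\|e^{(m)}\|^2)/2$). The scheme: $u^{(n+1)}$ solves it at step $n$ if $\delta^+_t u^{(n)}_k = -\frac{\alpha}{6}\delta^{\langle 1\rangle}_x\{(u^{(n+1)}_k)^2 + u^{(n+1)}_k u^{(n)}_k + (u^{(n)}_k)^2\} + \beta\delta^{\langle 1\rangle}_x\delta^{\langle 2\rangle}_x \mu^+_t u^{(n)}_k$ for all $k$. $\varepsilon_1(q,r,\Delta x) = (q-1)(\Delta x)^3[\frac{|\alpha|}{6}(\Delta x)^2(q^2+q+1)r + \frac{3}{2}|\beta|(q+1)]^{-1}$, $\varepsilon_2(q,r,\Delta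 x) = (\Delta x)^3[\frac{|\alpha|}{6}(\Delta x)^2(2q+1)r + \frac{3}{2}|\beta|]^{-1}$. $\tilde u^{(m)}_k=u(m\Delta t,k\Delta x)$, $e^{(m)}=u^{(m)}-\tilde u^{(m)}$, and the local truncation error $\tau^{(m)}$ is defined by $\delta^+_t \tilde u^{(m)}_k = -\frac{\alpha}{6}\delta^{\langle 1\rangle}_x\{(\tilde u^{(m+1)}_k)^2 + \tilde u^{(m+1)}_k \tilde u^{(m)}_k + (\tilde u^{(m)}_k)^2\} + \beta\delta^{\langle 1\rangle}_x\delta^{\langle 2\rangle}_x \mu^+_t \tilde u^{(m)}_k+\tau^{(m)}_k$. *)

theory Defs
  imports Complex_Main
begin

definition periodic_grid :: "nat \<Rightarrow> (int \<Rightarrow> real) \<Rightarrow> bool" where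
  "periodic_grid K v \<longleftrightarrow> (\<forall>k. v (k + int K) = v k)"

definition dxp :: "real \<Rightarrow> (int \<Rightarrow> real) \<Rightarrow> int \<Rightarrow> real" where
  "dxp h v k = (v (k + 1) - v k) / h"

definition dx1 :: "real \<Rightarrow> (int \<Rightarrow> real) \<Rightarrow> int \<Rightarrow> real" where
  "dx1 h v k = (v (k + 1) - v (k - 1)) / (2 * h)"

definition dx2 :: "real \<Rightarrow> (int \<Rightarrow> real) \<Rightarrow> int \<Rightarrow> real" where
  "dx2 h v k = (v (k + 1) - 2 * v k + v (k - 1)) / h ^ 2"

definition gnorm :: "nat \<Rightarrow> real \<Rightarrow> (int \<Rightarrow> real) \<Rightarrow> real" where
  "gnorm K h v = sqrt (\<Sum>k = 1..int K. (v k) ^ 2 * h)"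

definition supnorm :: "nat \<Rightarrow> (int \<Rightarrow> real) \<Rightarrow> real" where
  "supnorm K v = Max ((\<lambda>k. \<bar>v k\<bar>) ` {1..int K})"

definition h1norm :: "nat \<Rightarrow> real \<Rightarrow> (int \<Rightarrow> real) \<Rightarrow> real" where
  "h1norm K h v = sqrt ((gnorm K h v) ^ 2 + (gnorm K h (dxp h v)) ^ 2)"

text \<open>Right-hand side of the scheme, with w = new step, v = old step.\<close>
definition scheme_rhs :: "real \<Rightarrow> real \<Rightarrow> real \<Rightarrow> (int \<Rightarrow> real) \<Rightarrow> (int \<Rightarrow> real) \<Rightarrow> int \<Rightarrow> real" where
  "scheme_rhs \<alpha> \<beta> h w v k =
     - (\<alpha> / 6) * dx1 h (\<lambda>j. (w j) ^ 2 + w j * v j + (v j) ^ 2) k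
     + \<beta> * dx1 h (dx2 h (\<lambda>j. (w j + v j) / 2)) k"

definition solves_step :: "real \<Rightarrow> real \<Rightarrow> real \<Rightarrow> real \<Rightarrow> (int \<Rightarrow> real) \<Rightarrow> (int \<Rightarrow> real) \<Rightarrow> bool" where
  "solves_step \<alpha> \<beta> dt h v w \<longleftrightarrow> (\<forall>k. (w k - v k) / dt = scheme_rhs \<alpha> \<beta> h w v k)"

definition eps1 :: "real \<Rightarrow> real \<Rightarrow> real \<Rightarrow> real \<Rightarrow> real \<Rightarrow> real" where
  "eps1 \<alpha> \<beta> q r h = (q - 1) * h ^ 3 /
     (\<bar>\<alpha>\<bar> / 6 * h ^ 2 * (q ^ 2 + q + 1) * r + 3 / 2 * \<bar>\<beta>\<bar> * (q + 1))"

definition eps2 :: "real \<Rightarrow> real \<Rightarrow> real \<Rightarrow> real \<Rightarrow> real \<Rightarrow> real" where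
  "eps2 \<alpha> \<beta> q r h = h ^ 3 /
     (\<bar>\<alpha>\<bar> / 6 * h ^ 2 * (2 * q + 1) * r + 3 / 2 * \<bar>\<beta>\<bar>)"

definition usamp :: "(real \<Rightarrow> real \<Rightarrow> real) \<Rightarrow> real \<Rightarrow> real \<Rightarrow> nat \<Rightarrow> int \<Rightarrow> real" where
  "usamp u dt h m k = u (real m * dt) (real_of_int k * h)"

definition trunc_err :: "real \<Rightarrow> real \<Rightarrow> (real \<Rightarrow> real \<Rightarrow> real) \<Rightarrow> real \<Rightarrow> real \<Rightarrow> nat \<Rightarrow> int \<Rightarrow> real" where
  "trunc_err \<alpha> \<beta> u dt h m k =
     (usamp u dt h (Suc m) k - usamp u dt h m k) / dt
     - scheme_rhs \<alpha> \<beta> h (usamp u dt h (Suc m)) (usamp u dt h m) k"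

end

(* Energy method.  Subtracting the defining equation of the
   truncation error from the scheme gives an equation for the error e; multiply it by the time
   mean p = (e(m+1) + e(m)) / 2 and sum over a period.  The dispersive term drops out because
   the product of central second and first differences telescopes, and summation by parts moves
   the central difference of the nonlinear term onto p.  The nonlinear difference is
   (w^2 + w v + v^2) - (wt^2 + wt vt + vt^2) = (w - wt)(w + wt + v) + (v - vt)(wt + v + vt),
   whose factors are bounded by (q + 2) r and 3 r thanks to the sup-norm bounds; Young's inequality
   and the bound of the central difference by the forward difference give C1, and the truncation
   error contributes its squared norm. *)

theory Submission
  imports Defs
begin

lemma periodic_grid_shift: "periodic_grid K g \<Longrightarrow> periodic_grid K (\<lambda>k. g (k + j))"
  unfolding periodic_grid_def by (metis add.commute add.left_commute)

lemma periodic_grid_map: "periodic_grid K f \<Longrightarrow> periodic_grid K (\<lambda>k. F (f k))"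
  unfolding periodic_grid_def by simp

lemma periodic_grid_map2:
  "periodic_grid K f \<Longrightarrow> periodic_grid K g \<Longrightarrow> periodic_grid K (\<lambda>k. F (f k) (g k))"
  unfolding periodic_grid_def by simp

lemma periodic_grid_dxp: "periodic_grid K f \<Longrightarrow> periodic_grid K (dxp h f)"
  using periodic_grid_shift[of K f 1] unfolding dxp_def periodic_grid_def by simp

lemma periodic_grid_dx2: "periodic_grid K f \<Longrightarrow> periodic_grid K (dx2 h f)"
  using periodic_grid_shift[of K f 1] periodic_grid_shift[of K f "-1"]
  unfolding dx2_def periodic_grid_def by simp

lemma periodic_grid_add_multiple:
  assumes "periodic_grid K v"
  shows "v (k + j * int K) = v k"
proof (induction j rule: int_induct[where k = 0])
  case (step1 i)
  then show ?case
    using assms unfolding periodic_grid_def by (metis add.assoc distrib_right mult_1)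
next
  case (step2 i)
  then show ?case
    using assms unfolding periodic_grid_def by (metis diff_add_cancel left_diff_distrib' mult_1 add.assoc)
qed simp

lemma abs_le_supnorm:
  assumes "periodic_grid K v" "K > 0"
  shows "\<bar>v k\<bar> \<le> supnorm K v"
proof -
  define k' where "k' = (k - 1) mod int K + 1"
  have "0 \<le> (k - 1) mod int K" "(k - 1) mod int K < int K"
    using assms(2) by simp_all
  then have "k' \<in> {1..int K}"
    unfolding k'_def by simp
  moreover have "v k = v k'"
    using periodic_grid_add_multiple[OF assms(1), of k' "(k - 1) div int K"]
    unfolding k'_def by (simp add: algebra_simps)
  ultimately show ?thesis
    unfolding supnorm_def by (intro Max_ge) auto
qed

lemma sum_periodic_shift_one:
  assumes "periodic_grid K g"
  shows "(\<Sum>k=1..int K. g (k + 1)) = (\<Sum>k=1..int K. g k)"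
proof (cases "K = 0")
  case False
  have "(\<Sum>k=1..int K. g (k + 1)) = (\<Sum>k=2..int K + 1. g k)"
    using sum.reindex[of "\<lambda>k. k + 1" "{1..int K}" g] by simp
  also have "\<dots> = (\<Sum>k=2..int K. g k) + g (1 + int K)"
    using False by (simp add: atLeastAtMostPlus1_int_conv add.commute)
  also have "\<dots> = (\<Sum>k=1..int K. g k)"
  proof -
    have "{1..int K} = insert 1 {2..int K}"
      using False by auto
    then show ?thesis
      using assms unfolding periodic_grid_def by (simp add: add.commute)
  qed
  finally show ?thesis .
qed simp

lemma sum_periodic_shift:
  assumes "periodic_grid K g"
  shows "(\<Sum>k=1..int K. g (k + j)) = (\<Sum>k=1..int K. g k)"
proof (induction j rule: int_induct[where k = 0])
  case (step1 i)
  then show ?case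
    using sum_periodic_shift_one[OF periodic_grid_shift[OF assms, of i]] by (simp add: ac_simps)
next
  case (step2 i)
  then show ?case
    using sum_periodic_shift_one[OF periodic_grid_shift[OF assms, of "i - 1"]] by (simp add: ac_simps)
qed simp

lemma sum_periodic_backward_diff:
  "periodic_grid K g \<Longrightarrow> (\<Sum>k=1..int K. g k - g (k - 1)) = 0"
  using sum_periodic_shift[of K g "-1"] by (simp add: sum_subtractf)

lemma sum_dx1_mult_eq_minus:
  assumes "periodic_grid K f" "periodic_grid K p"
  shows "(\<Sum>k=1..int K. dx1 h f k * p k) = - (\<Sum>k=1..int K. f k * dx1 h p k)"
proof -
  define G where "G k = f (k + 1) * p k + f k * p (k + 1)" for k
  have "periodic_grid K G"
    using periodic_grid_shift[OF assms(1), of 1] periodic_grid_shift[OF assms(2), of 1] assms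
    unfolding G_def periodic_grid_def by simp
  moreover have "dx1 h f k * p k + f k * dx1 h p k = (G k - G (k - 1)) / (2 * h)" for k
    unfolding dx1_def G_def by (simp add: add_divide_distrib diff_divide_distrib algebra_simps)
  ultimately have "(\<Sum>k=1..int K. dx1 h f k * p k + f k * dx1 h p k) = 0"
    using sum_periodic_backward_diff[of K G] by (simp add: sum_divide_distrib[symmetric])
  then show ?thesis
    by (simp add: sum.distrib eq_neg_iff_add_eq_0)
qed

lemma dx1_eq_mean_dxp: "h \<noteq> 0 \<Longrightarrow> dx1 h p k = (dxp h p k + dxp h p (k - 1)) / 2"
  unfolding dx1_def dxp_def by (simp add: field_simps)

lemma dx2_eq_diff_dxp: "h \<noteq> 0 \<Longrightarrow> dx2 h p k = (dxp h p k - dxp h p (k - 1)) / h"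
  unfolding dx2_def dxp_def by (simp add: field_simps power2_eq_square)

lemma dx1_diff: "dx1 h (\<lambda>j. f j - g j) k = dx1 h f k - dx1 h g k"
  unfolding dx1_def by (simp add: diff_divide_distrib)

lemma dx1_cmult: "dx1 h (\<lambda>j. c * f j) k = c * dx1 h f k"
  unfolding dx1_def by (simp add: right_diff_distrib)

lemma dx2_diff: "dx2 h (\<lambda>j. f j - g j) = (\<lambda>j. dx2 h f j - dx2 h g j)"
  unfolding dx2_def by (simp add: diff_divide_distrib[symmetric] algebra_simps)

lemma sum_dx1_dx2_mult_self_eq_0:
  assumes "periodic_grid K p" "h \<noteq> 0"
  shows "(\<Sum>k=1..int K. dx1 h (dx2 h p) k * p k) = 0"
proof -
  have "dx2 h p k * dx1 h p k = ((dxp h p k)\<^sup>2 - (dxp h p (k - 1))\<^sup>2) / (2 * h)" for k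
    using assms(2) by (simp add: dx1_eq_mean_dxp dx2_eq_diff_dxp power2_eq_square algebra_simps
        add_divide_distrib diff_divide_distrib)
  moreover have "periodic_grid K (\<lambda>k. (dxp h p k)\<^sup>2)"
    by (rule periodic_grid_map[OF periodic_grid_dxp[OF assms(1)]])
  ultimately have "(\<Sum>k=1..int K. dx2 h p k * dx1 h p k) = 0"
    using sum_periodic_backward_diff[of K "\<lambda>k. (dxp h p k)\<^sup>2"]
    by (simp add: sum_divide_distrib[symmetric])
  then show ?thesis
    using sum_dx1_mult_eq_minus[OF periodic_grid_dx2[OF assms(1)] assms(1), of h] by simp
qed

lemma square_mean_le: "((a + b) / 2)\<^sup>2 \<le> (a\<^sup>2 + b\<^sup>2) / (2::real)"
proof -
  have "0 \<le> (a - b)\<^sup>2" by simp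
  then show ?thesis by (simp add: power2_eq_square field_simps)
qed

lemma sum_dx1_sq_le_sum_dxp_sq:
  assumes "periodic_grid K p" "h \<noteq> 0"
  shows "(\<Sum>k=1..int K. (dx1 h p k)\<^sup>2) \<le> (\<Sum>k=1..int K. (dxp h p k)\<^sup>2)"
proof -
  have "(\<Sum>k=1..int K. (dx1 h p k)\<^sup>2)
      \<le> (\<Sum>k=1..int K. ((dxp h p k)\<^sup>2 + (dxp h p (k - 1))\<^sup>2) / 2)"
    using square_mean_le by (intro sum_mono) (simp add: dx1_eq_mean_dxp[OF assms(2)])
  also have "\<dots> = (\<Sum>k=1..int K. (dxp h p k)\<^sup>2)"
    using sum_periodic_shift[of K "\<lambda>k. (dxp h p k)\<^sup>2" "-1"]
      periodic_grid_map[OF periodic_grid_dxp[OF assms(1)], where F = power2]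
    by (simp add: sum_divide_distrib[symmetric] sum.distrib)
  finally show ?thesis .
qed

lemma gnorm_sq: "h \<ge> 0 \<Longrightarrow> (gnorm K h v)\<^sup>2 = h * (\<Sum>k=1..int K. (v k)\<^sup>2)"
  unfolding gnorm_def by (simp add: sum_nonneg sum_distrib_left mult.commute)

lemma h1norm_sq:
  "h \<ge> 0 \<Longrightarrow>
    (h1norm K h v)\<^sup>2 = h * (\<Sum>k=1..int K. (v k)\<^sup>2) + h * (\<Sum>k=1..int K. (dxp h v k)\<^sup>2)"
  unfolding h1norm_def real_sqrt_pow2[OF add_nonneg_nonneg[OF zero_le_power2 zero_le_power2]]
  by (simp add: gnorm_sq)

definition error_growth_const :: "real \<Rightarrow> real \<Rightarrow> real \<Rightarrow> real" where
  "error_growth_const \<alpha> q r = max (3 * \<bar>\<alpha>\<bar> * (2 * q ^ 2 + 1) * r ^ 2 + 1) (\<bar>\<alpha>\<bar> / 2)"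

lemma error_growth_const_ge_1: "error_growth_const \<alpha> q r \<ge> 1"
proof -
  have "0 \<le> 3 * \<bar>\<alpha>\<bar> * (2 * q ^ 2 + 1) * r ^ 2" by simp
  then show ?thesis
    unfolding error_growth_const_def by linarith
qed

lemma error_growth_const_product_bound:
  fixes \<alpha> q r :: real
  defines "C \<equiv> error_growth_const \<alpha> q r"
  shows "3 / 2 * \<alpha>\<^sup>2 * (2 * q\<^sup>2 + 1) * r\<^sup>2 \<le> C * (C - 1)"
proof -
  have "\<bar>\<alpha>\<bar> / 2 * (3 * \<bar>\<alpha>\<bar> * (2 * q\<^sup>2 + 1) * r\<^sup>2) \<le> C * (C - 1)"
    unfolding C_def error_growth_const_def by (intro mult_mono) auto
  moreover have "\<bar>\<alpha>\<bar> / 2 * (3 * \<bar>\<alpha>\<bar> * (2 * q\<^sup>2 + 1) * r\<^sup>2) = 3 / 2 * \<bar>\<alpha>\<bar>\<^sup>2 * (2 * q\<^sup>2 + 1) * r\<^sup>2"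
    by (simp add: power2_eq_square)
  ultimately show ?thesis
    by (metis power2_abs)
qed

lemma cubic_diff_sq_le:
  fixes w v wt vt q r :: real
  assumes "\<bar>w\<bar> \<le> q * r" "\<bar>v\<bar> \<le> r" "\<bar>wt\<bar> \<le> r" "\<bar>vt\<bar> \<le> r"
  shows "((w\<^sup>2 + w * v + v\<^sup>2) - (wt\<^sup>2 + wt * vt + vt\<^sup>2))\<^sup>2
    \<le> 27 * (2 * q\<^sup>2 + 1) * r\<^sup>2 * ((w - wt)\<^sup>2 + (v - vt)\<^sup>2)"
proof -
  define a b where "a = w + wt + v" and "b = wt + v + vt"
  have ab_bound: "a\<^sup>2 + b\<^sup>2 \<le> 27 * (2 * q\<^sup>2 + 1) * r\<^sup>2"
  proof -
    have "\<bar>a\<bar> \<le> (q + 2) * r" "\<bar>b\<bar> \<le> 3 * r"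
      unfolding a_def b_def using assms by (simp_all add: algebra_simps abs_le_iff)
    then have "a\<^sup>2 \<le> ((q + 2) * r)\<^sup>2" "b\<^sup>2 \<le> (3 * r)\<^sup>2"
      using power_mono[OF _ abs_ge_zero, of _ _ 2] by (metis power2_abs)+
    then have "a\<^sup>2 + b\<^sup>2 \<le> ((q + 2) * r)\<^sup>2 + (3 * r)\<^sup>2"
      by (rule add_mono)
    also have "\<dots> = ((q + 2)\<^sup>2 + 9) * r\<^sup>2"
      by (simp add: power2_eq_square algebra_simps)
    also have "\<dots> \<le> 27 * (2 * q\<^sup>2 + 1) * r\<^sup>2"
    proof (rule mult_right_mono)
      have "0 \<le> (q - 1)\<^sup>2" by simp
      then have "2 * q \<le> q\<^sup>2 + 1" by (simp add: power2_diff)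
      moreover have "0 \<le> q\<^sup>2" by simp
      ultimately have "4 * q \<le> 53 * q\<^sup>2 + 14" by linarith
      then show "(q + 2)\<^sup>2 + 9 \<le> 27 * (2 * q\<^sup>2 + 1)"
        by (simp add: power2_sum)
    qed simp
    finally show ?thesis .
  qed
  have "(w\<^sup>2 + w * v + v\<^sup>2) - (wt\<^sup>2 + wt * vt + vt\<^sup>2) = (w - wt) * a + (v - vt) * b"
    unfolding a_def b_def by (simp add: power2_eq_square algebra_simps)
  then have "((w\<^sup>2 + w * v + v\<^sup>2) - (wt\<^sup>2 + wt * vt + vt\<^sup>2))\<^sup>2 = ((w - wt) * a + (v - vt) * b)\<^sup>2"
    by simp
  also have "\<dots> \<le> (a\<^sup>2 + b\<^sup>2) * ((w - wt)\<^sup>2 + (v - vt)\<^sup>2)"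
  proof -
    have "0 \<le> ((w - wt) * b - (v - vt) * a)\<^sup>2" by simp
    then show ?thesis by (simp add: power2_eq_square algebra_simps)
  qed
  also have "\<dots> \<le> 27 * (2 * q\<^sup>2 + 1) * r\<^sup>2 * ((w - wt)\<^sup>2 + (v - vt)\<^sup>2)"
    using ab_bound by (rule mult_right_mono) simp
  finally show ?thesis .
qed

lemma mult_le_add_sq_of_sq_le:
  fixes a d S C :: real
  assumes "C > 0" "a\<^sup>2 \<le> 4 * C * S"
  shows "a * d \<le> S + C * d\<^sup>2"
proof -
  have "0 \<le> (a - 2 * C * d)\<^sup>2" by simp
  then have "0 \<le> 4 * C * (S + C * d\<^sup>2 - a * d)"
    using assms(2) by (simp add: power2_eq_square algebra_simps)
  then show ?thesis
    using assms(1) by (simp add: zero_le_mult_iff)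
qed

lemma cubic_term_le:
  fixes w v wt vt q r \<alpha> d :: real
  defines "C \<equiv> error_growth_const \<alpha> q r"
  assumes "\<bar>w\<bar> \<le> q * r" "\<bar>v\<bar> \<le> r" "\<bar>wt\<bar> \<le> r" "\<bar>vt\<bar> \<le> r"
  shows "\<alpha> / 3 * ((w\<^sup>2 + w * v + v\<^sup>2) - (wt\<^sup>2 + wt * vt + vt\<^sup>2)) * d
    \<le> (C - 1) / 2 * ((w - wt)\<^sup>2 + (v - vt)\<^sup>2) + C * d\<^sup>2"
proof -
  define f X where "f = (w\<^sup>2 + w * v + v\<^sup>2) - (wt\<^sup>2 + wt * vt + vt\<^sup>2)"
    and "X = (w - wt)\<^sup>2 + (v - vt)\<^sup>2"
  have "\<alpha>\<^sup>2 * f\<^sup>2 \<le> \<alpha>\<^sup>2 * (27 * (2 * q\<^sup>2 + 1) * r\<^sup>2 * X)"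
    unfolding f_def X_def using cubic_diff_sq_le[OF assms(2-5)] by (simp add: mult_left_mono)
  also have "\<dots> = 18 * (3 / 2 * \<alpha>\<^sup>2 * (2 * q\<^sup>2 + 1) * r\<^sup>2) * X"
    by (simp add: algebra_simps)
  also have "\<dots> \<le> 18 * (C * (C - 1)) * X"
    using error_growth_const_product_bound[of \<alpha> q r]
    unfolding C_def X_def by (intro mult_right_mono mult_left_mono) simp_all
  finally have "(\<alpha> / 3 * f)\<^sup>2 \<le> 4 * C * ((C - 1) / 2 * X)"
    by (simp add: power_mult_distrib power_divide algebra_simps)
  moreover have "C > 0"
    using error_growth_const_ge_1[of \<alpha> q r] unfolding C_def by linarith
  ultimately have "\<alpha> / 3 * f * d \<le> (C - 1) / 2 * X + C * d\<^sup>2"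
    using mult_le_add_sq_of_sq_le by blast
  then show ?thesis
    unfolding f_def X_def .
qed

lemma energy_identity:
  fixes E E' F \<tau> :: "int \<Rightarrow> real"
  defines "p \<equiv> \<lambda>k. (E' k + E k) / 2"
  assumes "h > 0" "periodic_grid K E" "periodic_grid K E'" "periodic_grid K F"
    and error_step: "\<And>k. (E' k - E k) / dt = dx1 h F k + \<beta> * dx1 h (dx2 h p) k - \<tau> k"
  shows "((gnorm K h E')\<^sup>2 - (gnorm K h E)\<^sup>2) / dt
    = - 2 * h * (\<Sum>k=1..int K. F k * dx1 h p k + \<tau> k * p k)"
proof -
  have p_periodic: "periodic_grid K p"
    unfolding p_def by (rule periodic_grid_map2[OF assms(4,3)])
  have "((E' k)\<^sup>2 - (E k)\<^sup>2) / dt = 2 * ((E' k - E k) / dt * p k)" for k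
    unfolding p_def by (simp add: field_split_simps power2_eq_square algebra_simps)
  then have "((gnorm K h E')\<^sup>2 - (gnorm K h E)\<^sup>2) / dt
      = h * (\<Sum>k=1..int K. 2 * ((E' k - E k) / dt * p k))"
    using assms(2)
    by (simp only: gnorm_sq less_imp_le right_diff_distrib[symmetric] sum_subtractf[symmetric]
        times_divide_eq_right[symmetric] sum_divide_distrib)
  also have "\<dots> = 2 * h * (\<Sum>k=1..int K. (E' k - E k) / dt * p k)"
    by (simp only: sum_distrib_left[symmetric] mult.assoc mult.left_commute)
  also have "\<dots> = 2 * h * ((\<Sum>k=1..int K. dx1 h F k * p k)
      + \<beta> * (\<Sum>k=1..int K. dx1 h (dx2 h p) k * p k) - (\<Sum>k=1..int K. \<tau> k * p k))"
    by (simp add: error_step sum.distrib sum_subtractf sum_distrib_left algebra_simps)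
  also have "\<dots> = - 2 * h * (\<Sum>k=1..int K. F k * dx1 h p k + \<tau> k * p k)"
    using sum_dx1_mult_eq_minus[OF assms(5) p_periodic, of h] sum_dx1_dx2_mult_self_eq_0[OF p_periodic] assms(2)
    by (simp add: sum.distrib algebra_simps)
  finally show ?thesis .
qed

lemma scheme_error_equation:
  fixes w v wt vt :: "int \<Rightarrow> real"
  assumes "solves_step \<alpha> \<beta> dt h v w"
  shows "((w k - wt k) - (v k - vt k)) / dt
    = dx1 h (\<lambda>j. - (\<alpha> / 6) * (((w j)\<^sup>2 + w j * v j + (v j)\<^sup>2) - ((wt j)\<^sup>2 + wt j * vt j + (vt j)\<^sup>2))) k
      + \<beta> * dx1 h (dx2 h (\<lambda>j. ((w j - wt j) + (v j - vt j)) / 2)) k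
      - ((wt k - vt k) / dt - scheme_rhs \<alpha> \<beta> h wt vt k)"
proof -
  have step: "((w k - wt k) - (v k - vt k)) / dt = scheme_rhs \<alpha> \<beta> h w v k - (wt k - vt k) / dt"
    using assms unfolding solves_step_def by (simp add: diff_divide_distrib)
  have nonlinear: "dx1 h (\<lambda>j. - (\<alpha> / 6) * (((w j)\<^sup>2 + w j * v j + (v j)\<^sup>2) - ((wt j)\<^sup>2 + wt j * vt j + (vt j)\<^sup>2))) k
      = - (\<alpha> / 6) * dx1 h (\<lambda>j. (w j)\<^sup>2 + w j * v j + (v j)\<^sup>2) k
        - - (\<alpha> / 6) * dx1 h (\<lambda>j. (wt j)\<^sup>2 + wt j * vt j + (vt j)\<^sup>2) k"
    by (simp only: dx1_cmult dx1_diff right_diff_distrib)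
  have "(\<lambda>j. ((w j - wt j) + (v j - vt j)) / 2) = (\<lambda>j. (w j + v j) / 2 - (wt j + vt j) / 2)"
    by (rule ext) (simp add: diff_divide_distrib add_divide_distrib)
  then have dispersive: "dx1 h (dx2 h (\<lambda>j. ((w j - wt j) + (v j - vt j)) / 2)) k
      = dx1 h (dx2 h (\<lambda>j. (w j + v j) / 2)) k - dx1 h (dx2 h (\<lambda>j. (wt j + vt j) / 2)) k"
    by (simp only: dx2_diff dx1_diff)
  show ?thesis
    unfolding nonlinear dispersive step unfolding scheme_rhs_def by (simp add: algebra_simps)
qed

lemma sum_dx1_mean_sq_le:
  assumes "periodic_grid K f" "periodic_grid K g" "h \<noteq> 0"
  shows "(\<Sum>k=1..int K. (dx1 h (\<lambda>j. (f j + g j) / 2) k)\<^sup>2)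
    \<le> ((\<Sum>k=1..int K. (dxp h f k)\<^sup>2) + (\<Sum>k=1..int K. (dxp h g k)\<^sup>2)) / 2"
proof -
  have "(\<Sum>k=1..int K. (dx1 h (\<lambda>j. (f j + g j) / 2) k)\<^sup>2)
      \<le> (\<Sum>k=1..int K. (dxp h (\<lambda>j. (f j + g j) / 2) k)\<^sup>2)"
    using periodic_grid_map2[OF assms(1,2)] assms(3) by (rule sum_dx1_sq_le_sum_dxp_sq)
  also have "\<dots> \<le> (\<Sum>k=1..int K. ((dxp h f k)\<^sup>2 + (dxp h g k)\<^sup>2) / 2)"
  proof (rule sum_mono)
    fix k
    have "dxp h (\<lambda>j. (f j + g j) / 2) k = (dxp h f k + dxp h g k) / 2"
      unfolding dxp_def using assms(3) by (simp add: field_simps)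
    then show "(dxp h (\<lambda>j. (f j + g j) / 2) k)\<^sup>2 \<le> ((dxp h f k)\<^sup>2 + (dxp h g k)\<^sup>2) / 2"
      using square_mean_le by metis
  qed
  also have "\<dots> = ((\<Sum>k=1..int K. (dxp h f k)\<^sup>2) + (\<Sum>k=1..int K. (dxp h g k)\<^sup>2)) / 2"
    by (simp add: sum.distrib sum_divide_distrib[symmetric])
  finally show ?thesis .
qed

lemma energy_integrand_le:
  fixes w v wt vt q r \<alpha> d t :: real
  defines "C \<equiv> error_growth_const \<alpha> q r"
  assumes "\<bar>w\<bar> \<le> q * r" "\<bar>v\<bar> \<le> r" "\<bar>wt\<bar> \<le> r" "\<bar>vt\<bar> \<le> r"
  shows "\<alpha> / 3 * ((w\<^sup>2 + w * v + v\<^sup>2) - (wt\<^sup>2 + wt * vt + vt\<^sup>2)) * d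
      - 2 * (t * (((w - wt) + (v - vt)) / 2))
    \<le> C / 2 * ((w - wt)\<^sup>2 + (v - vt)\<^sup>2) + C * d\<^sup>2 + t\<^sup>2"
proof -
  define P X where "P = ((w - wt) + (v - vt)) / 2" and "X = (w - wt)\<^sup>2 + (v - vt)\<^sup>2"
  have "- 2 * (t * P) \<le> t\<^sup>2 + P\<^sup>2"
  proof -
    have "0 \<le> (t + P)\<^sup>2" by simp
    then show ?thesis by (simp add: power2_sum)
  qed
  moreover have "P\<^sup>2 \<le> X / 2"
    unfolding P_def X_def by (rule square_mean_le)
  moreover have "(C - 1) / 2 * X = C / 2 * X - X / 2"
    by (simp add: field_simps)
  ultimately show ?thesis
    using cubic_term_le[OF assms(2-5), of \<alpha> d] unfolding C_def P_def X_def by linarith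
qed

lemma scheme_error_energy_estimate:
  fixes w v wt vt :: "int \<Rightarrow> real" and \<alpha> \<beta> q r h dt :: real
  defines "e' \<equiv> \<lambda>k. w k - wt k" and "e \<equiv> \<lambda>k. v k - vt k"
    and "\<tau> \<equiv> \<lambda>k. (wt k - vt k) / dt - scheme_rhs \<alpha> \<beta> h wt vt k"
    and "C \<equiv> error_growth_const \<alpha> q r"
  assumes h_pos: "h > 0"
    and periodic: "periodic_grid K w" "periodic_grid K v" "periodic_grid K wt" "periodic_grid K vt"
    and step: "solves_step \<alpha> \<beta> dt h v w"
    and bounds: "\<And>k. \<bar>w k\<bar> \<le> q * r" "\<And>k. \<bar>v k\<bar> \<le> r" "\<And>k. \<bar>wt k\<bar> \<le> r" "\<And>k. \<bar>vt k\<bar> \<le> r"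
  shows "((gnorm K h e')\<^sup>2 - (gnorm K h e)\<^sup>2) / dt
    \<le> C * (((h1norm K h e')\<^sup>2 + (h1norm K h e)\<^sup>2) / 2) + (gnorm K h \<tau>)\<^sup>2"
proof -
  define p d f where "p = (\<lambda>k. (e' k + e k) / 2)" and "d = dx1 h p"
    and "f = (\<lambda>k. ((w k)\<^sup>2 + w k * v k + (v k)\<^sup>2) - ((wt k)\<^sup>2 + wt k * vt k + (vt k)\<^sup>2))"
  have "C \<ge> 0"
    using error_growth_const_ge_1 unfolding C_def by (rule order_trans[rotated]) simp
  have e'_periodic: "periodic_grid K e'" and e_periodic: "periodic_grid K e"
    unfolding e'_def e_def using periodic by (auto intro: periodic_grid_map2)
  have "periodic_grid K (\<lambda>k. - (\<alpha> / 6) * f k)"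
    using periodic unfolding f_def periodic_grid_def by simp
  moreover have "(e' k - e k) / dt = dx1 h (\<lambda>k. - (\<alpha> / 6) * f k) k + \<beta> * dx1 h (dx2 h p) k - \<tau> k" for k
    unfolding e'_def e_def f_def p_def \<tau>_def by (rule scheme_error_equation[OF step])
  ultimately have "((gnorm K h e')\<^sup>2 - (gnorm K h e)\<^sup>2) / dt
      = - 2 * h * (\<Sum>k=1..int K. - (\<alpha> / 6) * f k * d k + \<tau> k * p k)"
    using energy_identity[OF h_pos e_periodic e'_periodic] unfolding p_def d_def by blast
  also have "\<dots> = h * (\<Sum>k=1..int K. - 2 * (- (\<alpha> / 6) * f k * d k + \<tau> k * p k))"
    by (simp only: sum_distrib_left[symmetric] mult.assoc mult.left_commute)
  also have "\<dots> = h * (\<Sum>k=1..int K. \<alpha> / 3 * f k * d k - 2 * (\<tau> k * p k))"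
    by (intro arg_cong[where f = "\<lambda>s. h * s"] sum.cong refl) (simp add: field_simps)
  also have "\<dots> \<le> h * (\<Sum>k=1..int K. C / 2 * ((e' k)\<^sup>2 + (e k)\<^sup>2) + C * (d k)\<^sup>2 + (\<tau> k)\<^sup>2)"
    using energy_integrand_le[OF bounds] h_pos
    unfolding C_def e'_def e_def f_def p_def by (intro mult_left_mono sum_mono) auto
  also have "\<dots> = C / 2 * (h * (\<Sum>k=1..int K. (e' k)\<^sup>2) + h * (\<Sum>k=1..int K. (e k)\<^sup>2))
      + C * (h * (\<Sum>k=1..int K. (d k)\<^sup>2)) + h * (\<Sum>k=1..int K. (\<tau> k)\<^sup>2)"
    by (simp add: sum.distrib sum_distrib_left algebra_simps)
  also have "\<dots> \<le> C / 2 * (h * (\<Sum>k=1..int K. (e' k)\<^sup>2) + h * (\<Sum>k=1..int K. (e k)\<^sup>2))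
      + C / 2 * (h * (\<Sum>k=1..int K. (dxp h e' k)\<^sup>2) + h * (\<Sum>k=1..int K. (dxp h e k)\<^sup>2))
      + h * (\<Sum>k=1..int K. (\<tau> k)\<^sup>2)"
  proof -
    have "h * (\<Sum>k=1..int K. (d k)\<^sup>2)
        \<le> h * (((\<Sum>k=1..int K. (dxp h e' k)\<^sup>2) + (\<Sum>k=1..int K. (dxp h e k)\<^sup>2)) / 2)"
      using sum_dx1_mean_sq_le[OF e'_periodic e_periodic, of h] h_pos
      unfolding d_def p_def by (intro mult_left_mono) auto
    from mult_left_mono[OF this \<open>C \<ge> 0\<close>] show ?thesis
      by (simp add: algebra_simps)
  qed
  also have "\<dots> = C * (((h1norm K h e')\<^sup>2 + (h1norm K h e)\<^sup>2) / 2) + (gnorm K h \<tau>)\<^sup>2"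
    using h_pos by (simp add: h1norm_sq gnorm_sq algebra_simps)
  finally show ?thesis .
qed

lemma usamp_periodic_bounded:
  fixes u :: "real \<Rightarrow> real \<Rightarrow> real" and T L s :: real
  assumes "T > 0" "K > 0" "n \<le> M"
    and "\<forall>t\<in>{0..T}. \<forall>x. u t (x + L) = u t x" "\<forall>t\<in>{0..T}. \<forall>x. \<bar>u t x\<bar> \<le> s"
  shows "periodic_grid K (usamp u (T / real M) (L / real K) n)"
    and "\<bar>usamp u (T / real M) (L / real K) n k\<bar> \<le> s"
proof -
  have "real n * (T / real M) \<le> T"
  proof (cases "M = 0")
    case False
    then have "real n / real M \<le> 1"
      using assms(3) by simp
    from mult_left_mono[OF this, of T] show ?thesis
      using assms(1) by (simp add: ac_simps)
  qed (use assms(1) in simp)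
  then have "real n * (T / real M) \<in> {0..T}"
    using assms(1) by simp
  moreover have "real_of_int (k + int K) * (L / real K) = real_of_int k * (L / real K) + L" for k
    using assms(2) by (simp add: field_simps)
  ultimately show "periodic_grid K (usamp u (T / real M) (L / real K) n)"
    and "\<bar>usamp u (T / real M) (L / real K) n k\<bar> \<le> s"
    using assms(4,5) unfolding periodic_grid_def usamp_def by simp_all
qed

theorem lemma3p4:
  fixes L T \<alpha> \<beta> q r c0 :: real
    and K M M0 :: nat
    and u ux uxx uxxx :: "real \<Rightarrow> real \<Rightarrow> real"
    and U :: "nat \<Rightarrow> int \<Rightarrow> real"
  defines "dx \<equiv> L / real K"
    and "dt \<equiv> T / real M"
  assumes L_pos: "L > 0" and K_pos: "K > 0" and T_pos: "T > 0"
    and beta_nz: "\<beta> \<noteq> 0"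
    and q_gt: "q > 1" and M0_lt: "M0 < M"
    and u_periodic: "\<forall>t\<in>{0..T}. \<forall>x. u t (x + L) = u t x"
    and ux_deriv: "\<forall>t\<in>{0..T}. \<forall>x. ((\<lambda>y. u t y) has_real_derivative ux t x) (at x)"
    and uxx_deriv: "\<forall>t\<in>{0..T}. \<forall>x. ((\<lambda>y. ux t y) has_real_derivative uxx t x) (at x)"
    and uxxx_deriv: "\<forall>t\<in>{0..T}. \<forall>x. ((\<lambda>y. uxx t y) has_real_derivative uxxx t x) (at x)"
    and pde: "\<forall>t\<in>{0..T}. \<forall>x. ((\<lambda>s. u s x) has_real_derivative
                 (- \<alpha> * u t x * ux t x + \<beta> * uxxx t x)) (at t within {0..T})"
    and r_bound: "\<exists>s<r. \<forall>t\<in>{0..T}. \<forall>x. \<bar>u t x\<bar> \<le> s"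
    and init: "\<forall>k. U 0 k = u 0 (real_of_int k * dx)"
    and U_periodic: "\<forall>n\<le>Suc M0. periodic_grid K (U n)"
    and U_scheme: "\<forall>n\<le>M0. solves_step \<alpha> \<beta> dt dx (U n) (U (Suc n))"
    and U_bound: "\<forall>m\<le>M0. supnorm K (U m) \<le> r"
    and dt_small: "dt < min (eps1 \<alpha> \<beta> q r dx) (eps2 \<alpha> \<beta> q r dx)"
    and U_last: "supnorm K (U (Suc M0)) \<le> q * r"
    and c0_pos: "c0 > 0"
    and tau_bound: "\<forall>m\<le>M0.
        gnorm K dx (trunc_err \<alpha> \<beta> u dt dx m) \<le> c0 * (dt ^ 2 + dx ^ 2) \<and>
        gnorm K dx (dxp dx (trunc_err \<alpha> \<beta> u dt dx m)) \<le> c0 * (dt ^ 2 + dx ^ 2)"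
  shows "\<forall>m\<le>M0.
    let e = (\<lambda>n k. U n k - usamp u dt dx n k);
        C1 = max (3 * \<bar>\<alpha>\<bar> * (2 * q ^ 2 + 1) * r ^ 2 + 1) (\<bar>\<alpha>\<bar> / 2)
    in ((gnorm K dx (e (Suc m))) ^ 2 - (gnorm K dx (e m)) ^ 2) / dt
       \<le> C1 * (((h1norm K dx (e (Suc m))) ^ 2 + (h1norm K dx (e m)) ^ 2) / 2)
         + c0 ^ 2 * (dt ^ 2 + dx ^ 2) ^ 2"
proof -
  \<comment> \<open>The PDE, the smallness of \<open>dt\<close> and the initial data only serve to make the scheme solvable and
     the truncation error small; the estimate itself needs just the scheme and the bounds.\<close>
  have dx_pos: "dx > 0"
    unfolding dx_def using L_pos K_pos by simp
  obtain s where "s < r" and u_le_s: "\<forall>t\<in>{0..T}. \<forall>x. \<bar>u t x\<bar> \<le> s"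
    using r_bound by blast
  then have "r \<ge> 0"
    using T_pos by (metis abs_ge_zero atLeastAtMost_iff less_eq_real_def order.trans)
  have sample_periodic: "periodic_grid K (usamp u dt dx n)" if "n \<le> M" for n
    using usamp_periodic_bounded(1)[OF T_pos K_pos that u_periodic u_le_s] unfolding dt_def dx_def .
  have sample_bound: "\<bar>usamp u dt dx n k\<bar> \<le> r" if "n \<le> M" for n k
    using usamp_periodic_bounded(2)[OF T_pos K_pos that u_periodic u_le_s, of k] \<open>s < r\<close>
    unfolding dt_def dx_def by linarith
  have U_le: "\<bar>U n k\<bar> \<le> r" if "n \<le> M0" for n k
    using abs_le_supnorm[OF _ K_pos] U_periodic U_bound that by (meson le_Suc_eq order_trans)
  have U_Suc_le: "\<bar>U (Suc m) k\<bar> \<le> q * r" if "m \<le> M0" for m k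
  proof (cases "m < M0")
    case True
    then show ?thesis
      using U_le[of "Suc m" k] mult_right_mono[of 1 q r] q_gt \<open>r \<ge> 0\<close> by simp
  next
    case False
    then show ?thesis
      using that abs_le_supnorm[OF U_periodic[rule_format, of "Suc M0"] K_pos, of k] U_last by simp
  qed
  have estimate: "((gnorm K dx (\<lambda>k. U (Suc m) k - usamp u dt dx (Suc m) k))\<^sup>2
        - (gnorm K dx (\<lambda>k. U m k - usamp u dt dx m k))\<^sup>2) / dt
      \<le> error_growth_const \<alpha> q r * (((h1norm K dx (\<lambda>k. U (Suc m) k - usamp u dt dx (Suc m) k))\<^sup>2
          + (h1norm K dx (\<lambda>k. U m k - usamp u dt dx m k))\<^sup>2) / 2)
        + (gnorm K dx (trunc_err \<alpha> \<beta> u dt dx m))\<^sup>2" if "m \<le> M0" for m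
    using scheme_error_energy_estimate[OF dx_pos U_periodic[rule_format, of "Suc m"] U_periodic[rule_format, of m]
        sample_periodic[of "Suc m"] sample_periodic[of m] U_scheme[rule_format, of m]
        U_Suc_le[OF that] U_le[of m] sample_bound[of "Suc m"] sample_bound[of m]]
      that M0_lt by (simp add: trunc_err_def[abs_def])
  have tau_sq: "(gnorm K dx (trunc_err \<alpha> \<beta> u dt dx m))\<^sup>2 \<le> c0\<^sup>2 * (dt\<^sup>2 + dx\<^sup>2)\<^sup>2"
    if "m \<le> M0" for m
  proof -
    have "0 \<le> gnorm K dx (trunc_err \<alpha> \<beta> u dt dx m)"
      unfolding gnorm_def using dx_pos by (simp add: sum_nonneg)
    then show ?thesis
      using tau_bound that by (simp add: power_mono flip: power_mult_distrib)
  qed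
  show ?thesis
    unfolding Let_def error_growth_const_def[symmetric]
    using estimate tau_sq by (blast intro: order_trans add_left_mono)
qed

end
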